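(* Let $K\ge2$, let $\mathbf{p}$ be a probability vector on $[K]$ with all $p_k>0$, let $\mathbf{W}$ be a $K\times K$ invertible row-stochastic matrix, and let $\hat{\mathbf{p}}_n$, $\check{\mathbf{p}}_n$ be as in the context. For a positive integer $\rho$ and $k\in[K]$ define $\hat\mu^{(\rho)}_{n,k}=n^\rho\mathbb{E}[(\hat p_{n,k}-p_k)^\rho]$ and $\check\mu^{(\rho)}_{n,k}=n^\rho\mathbb{E}[(\check p_{n,k}-p_k)^\rho]$. Then there is a constant $C>0$ (not depending on $n$) such that for all $n$, $$\big|\hat\mu^{(\rho)}_{n,k}-\check\mu^{(\rho)}_{n,k}\big|\le C\,n^\rho e^{-nD(\partial\mathbb{P}\mathbf{W}\Vert\mathbf{p}\mathbf{W})}.$$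
   Context: Setting: $X_1,\dots,X_n$ i.i.d. with law $\mathbf{p}$; each passed independently through $\mathbf{W}$ ($\Pr\{Y_i=\ell\mid X_i=k\}=W_{k,\ell}$), giving $\mathbf{y}_n$ with empirical distribution $\mathbf{t}(\mathbf{y}_n)$; $\check{\mathbf{p}}_n=\mathbf{t}(\mathbf{y}_n)\mathbf{W}^{-1}$ and $\hat{\mathbf{p}}_n=\mathrm{Proj}_{\mathbb{P}}(\check{\mathbf{p}}_n)$, where $\mathrm{Proj}_{\mathbb{P}}$ is a fixed map from vectors with entries summing to one into the probability simplex $\mathbb{P}$ with $\mathrm{Proj}_{\mathbb{P}}(\mathbf{v})=\mathbf{v}$ on $\mathbb{P}$. $\partial\mathbb{P}=\{\mathbf{r}\in\mathbb{P}:r_i=0\text{ for some }i\}$ and $D(\partial\mathbb{P}\mathbf{W}\Vert\mathbf{p}\mathbf{W})=\inf_{\mathbf{r}\in\partial\mathbb{P}}D(\mathbf{r}\mathbf{W}\Vert\mathbf{p}\mathbf{W})$ with $D$ the Kullback–Leibler divergence. *)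

theory Defs
  imports "HOL-Analysis.Analysis"
begin

definition prob_simplex :: "(real^'k::finite) set" where
  "prob_simplex = {r. (\<forall>i. r$i \<ge> 0) \<and> sum (\<lambda>i. r$i) UNIV = 1}"

definition prob_simplex_boundary :: "(real^'k::finite) set" where
  "prob_simplex_boundary = {r \<in> prob_simplex. \<exists>i. r$i = 0}"

definition row_stochastic :: "real^'k^'k::finite \<Rightarrow> bool" where
  "row_stochastic W \<longleftrightarrow> (\<forall>i j. W$i$j \<ge> 0) \<and> (\<forall>i. sum (\<lambda>j. W$i$j) UNIV = 1)"

definition KL :: "real^'k::finite \<Rightarrow> real^'k \<Rightarrow> real" where
  "KL q s = (\<Sum>l\<in>UNIV. if q$l = 0 then 0 else q$l * ln (q$l / s$l))"

definition D_boundary :: "real^'k::finite \<Rightarrow> real^'k^'k \<Rightarrow> real" where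
  "D_boundary p W = (INF r\<in>prob_simplex_boundary. KL (r v* W) (p v* W))"

text \<open>Empirical distribution (type) of the output sequence y_1..y_n (indices 0..n-1).\<close>
definition emp_dist :: "nat \<Rightarrow> (nat \<Rightarrow> 'k::finite) \<Rightarrow> real^'k" where
  "emp_dist n y = (\<chi> l. real (card {i. i < n \<and> y i = l}) / real n)"

text \<open>Expectation of a functional g of the output sequence, where X_1..X_n are i.i.d. with
  law p and each Y_i is obtained from X_i through the channel W independently.\<close>
definition expect_out :: "real^'k::finite \<Rightarrow> real^'k^'k \<Rightarrow> nat \<Rightarrow> ((nat \<Rightarrow> 'k) \<Rightarrow> real) \<Rightarrow> real" where
  "expect_out p W n g =
     (\<Sum>x\<in>PiE {..<n} (\<lambda>_. UNIV). \<Sum>y\<in>PiE {..<n} (\<lambda>_. UNIV).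
        (\<Prod>i<n. p$(x i) * W$(x i)$(y i)) * g y)"

definition check_est :: "real^'k^'k \<Rightarrow> nat \<Rightarrow> (nat \<Rightarrow> 'k::finite) \<Rightarrow> real^'k" where
  "check_est W n y = emp_dist n y v* matrix_inv W"

end

theory Submission
  imports Defs
begin

(* Where check p_n lies in the simplex the projection is the identity; elsewhere both k-th
   coordinates are bounded, so the two moments differ by at most a constant times the probability
   that check p_n leaves the simplex.  As check p_n sums to one, this needs a negative coordinate
   check p_(n,i) = (1/n) sum_j M(y_j, i), M = W^-1: an average of i.i.d. terms with mean p_i > 0
   falling below zero.  Chernoff's bound, at the t for which the exponential tilt s of the output
   law pW gives M(., i) mean zero, bounds this probability by Z^n with
   Z = E exp (- t M(Y, i)) = exp (- D(s || pW)).  Finally q = s W^-1 sums to one and has q_i = 0;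
   mixing q with p reaches the boundary of the simplex without increasing D(qW || pW) = D(s || pW),
   by convexity of D, so Z <= exp (- D(boundary W || pW)). *)

section \<open>Kullback-Leibler divergence\<close>

definition kl_term :: "real \<Rightarrow> real \<Rightarrow> real" where
  "kl_term x c = (if x = 0 then 0 else x * ln (x / c))"

lemma mult_ln_div_tangent_le:
  fixes u v c :: real
  assumes "u > 0" "v > 0" "c > 0"
  shows "v * ln (v / c) + (ln (v / c) + 1) * (u - v) \<le> u * ln (u / c)"
proof -
  have "ln (v / u) \<le> v / u - 1"
    using assms by (intro ln_le_minus_one) simp
  hence "u * ln (v / u) \<le> v - u"
    using assms mult_left_mono[of "ln (v / u)" "v / u - 1" u] by (simp add: field_simps)
  thus ?thesis
    using assms by (simp add: ln_div algebra_simps)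
qed

lemma kl_term_ge_diff:
  fixes x c :: real
  assumes "c > 0" "x \<ge> 0"
  shows "x - c \<le> kl_term x c"
  using assms mult_ln_div_tangent_le[of x c c] by (cases "x = 0") (auto simp: kl_term_def)

lemma kl_term_mix_le:
  fixes x c \<mu> :: real
  assumes "c > 0" "x \<ge> 0" "0 \<le> \<mu>" "\<mu> \<le> 1"
  shows "kl_term (\<mu> * c + (1 - \<mu>) * x) c \<le> (1 - \<mu>) * kl_term x c"
proof (cases "x = 0")
  case True
  have "\<mu> * c * ln \<mu> \<le> 0" if "\<mu> > 0"
    using that assms by (intro mult_nonneg_nonpos) auto
  with True assms show ?thesis
    by (cases "\<mu> = 0") (auto simp: kl_term_def)
next
  case False
  define y where "y = \<mu> * c + (1 - \<mu>) * x"
  have "y > 0"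
    using False assms unfolding y_def
    by (cases "\<mu> = 1") (auto intro: add_nonneg_pos add_pos_nonneg)
  \<comment> \<open>the tangent of \<open>y ln (y/c)\<close> at \<open>y\<close>, evaluated at \<open>c\<close> and at \<open>x\<close> and averaged\<close>
  have "\<mu> * (y * ln (y / c) + (ln (y / c) + 1) * (c - y))
      + (1 - \<mu>) * (y * ln (y / c) + (ln (y / c) + 1) * (x - y))
      \<le> \<mu> * (c * ln (c / c)) + (1 - \<mu>) * (x * ln (x / c))"
    using assms False \<open>y > 0\<close>
    by (intro add_mono mult_left_mono mult_ln_div_tangent_le) auto
  moreover have "\<mu> * (y * ln (y / c) + (ln (y / c) + 1) * (c - y))
      + (1 - \<mu>) * (y * ln (y / c) + (ln (y / c) + 1) * (x - y)) = y * ln (y / c)"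
    unfolding y_def by (simp add: algebra_simps)
  ultimately show ?thesis
    using False \<open>y > 0\<close> assms by (simp add: kl_term_def y_def)
qed

lemma KL_eq_sum_kl_term: "KL q s = (\<Sum>l\<in>UNIV. kl_term (q$l) (s$l))"
  unfolding KL_def kl_term_def ..

lemma KL_ge_sum_diff:
  fixes q s :: "real^'k::finite"
  assumes "\<forall>l. q$l \<ge> 0" "\<forall>l. s$l > 0"
  shows "(\<Sum>l\<in>UNIV. q$l) - (\<Sum>l\<in>UNIV. s$l) \<le> KL q s"
  unfolding KL_eq_sum_kl_term sum_subtractf[symmetric]
  using assms by (intro sum_mono kl_term_ge_diff) auto

lemma KL_nonneg:
  fixes q s :: "real^'k::finite"
  assumes "\<forall>l. q$l \<ge> 0" "\<forall>l. s$l > 0" "(\<Sum>l\<in>UNIV. q$l) = (\<Sum>l\<in>UNIV. s$l)"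
  shows "0 \<le> KL q s"
  using KL_ge_sum_diff[OF assms(1,2)] assms(3) by simp

lemma KL_mix_le:
  fixes q s :: "real^'k::finite"
  assumes "\<forall>l. q$l \<ge> 0" "\<forall>l. s$l > 0" "0 \<le> \<mu>" "\<mu> \<le> 1"
  shows "KL (\<chi> l. \<mu> * s$l + (1 - \<mu>) * q$l) s \<le> (1 - \<mu>) * KL q s"
  unfolding KL_eq_sum_kl_term sum_distrib_left
  using assms by (intro sum_mono) (simp add: kl_term_mix_le)

lemma matrix_inv_inverse:
  fixes W :: "real^'k::finite^'k"
  assumes "invertible W"
  shows "W ** matrix_inv W = mat 1" "matrix_inv W ** W = mat 1"
proof -
  have "W ** matrix_inv W = mat 1 \<and> matrix_inv W ** W = mat 1"
    using assms unfolding invertible_def matrix_inv_def by (rule someI_ex)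
  thus "W ** matrix_inv W = mat 1" "matrix_inv W ** W = mat 1" by auto
qed

lemma sum_vector_matrix_mult:
  fixes x :: "real^'k::finite" and A :: "real^'k^'k"
  assumes "\<forall>i. (\<Sum>l\<in>UNIV. A$i$l) = 1"
  shows "(\<Sum>l\<in>UNIV. (x v* A)$l) = (\<Sum>i\<in>UNIV. x$i)"
proof -
  have "(\<Sum>l\<in>UNIV. (x v* A)$l) = (\<Sum>l\<in>UNIV. \<Sum>i\<in>UNIV. x$i * A$i$l)"
    by (simp add: vector_matrix_mult_def)
  also have "\<dots> = (\<Sum>i\<in>UNIV. x$i * (\<Sum>l\<in>UNIV. A$i$l))"
    by (subst sum.swap) (simp add: sum_distrib_left)
  finally show ?thesis using assms by simp
qed

lemma matrix_inv_row_sum: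
  fixes W :: "real^'k::finite^'k"
  assumes "row_stochastic W" "invertible W"
  shows "(\<Sum>l\<in>UNIV. matrix_inv W $ i $ l) = 1"
proof -
  define one :: "real^'k" where "one = (\<chi> _. 1)"
  have "W *v one = one"
    using assms(1) unfolding row_stochastic_def one_def by (simp add: matrix_vector_mult_def vec_eq_iff)
  hence "matrix_inv W *v one = one"
    using matrix_inv_inverse[OF assms(2)] by (metis matrix_vector_mul_assoc matrix_vector_mul_lid)
  hence "(matrix_inv W *v one) $ i = 1" unfolding one_def by simp
  thus ?thesis unfolding one_def by (simp add: matrix_vector_mult_def)
qed

lemma vector_matrix_mult_nonneg:
  fixes r :: "real^'k::finite" and W :: "real^'k^'k"
  assumes "\<forall>i. r$i \<ge> 0" "row_stochastic W"
  shows "(r v* W)$l \<ge> 0"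
  using assms unfolding row_stochastic_def vector_matrix_mult_def by (auto intro!: sum_nonneg)

lemma vector_matrix_mult_pos:
  fixes p :: "real^'k::finite" and W :: "real^'k^'k"
  assumes "\<forall>i. p$i > 0" "row_stochastic W" "invertible W"
  shows "(p v* W)$l > 0"
proof -
  have "\<exists>j. W$j$l \<noteq> 0"
  proof (rule ccontr)
    assume "\<nexists>j. W$j$l \<noteq> 0"
    hence "(matrix_inv W ** W)$l$l = 0" by (simp add: matrix_matrix_mult_def)
    thus False using matrix_inv_inverse(2)[OF assms(3)] by (simp add: mat_def)
  qed
  then obtain j where "W$j$l \<noteq> 0" by blast
  hence "W$j$l > 0" using assms(2) unfolding row_stochastic_def by (metis less_le)
  hence "p$j * W$j$l > 0" using assms(1) by simp
  also have "p$j * W$j$l \<le> (\<Sum>i\<in>UNIV. p$i * W$i$l)"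
    using assms unfolding row_stochastic_def by (intro member_le_sum) (auto simp: less_imp_le)
  finally show ?thesis by (simp add: vector_matrix_mult_def)
qed

section \<open>Divergence from the boundary of the simplex\<close>

lemma exists_mix_nonneg_with_zero:
  fixes p q :: "real^'k::finite"
  assumes "\<forall>j. p$j > 0" "q$i \<le> 0"
  obtains \<mu> where "0 \<le> \<mu>" "\<mu> < 1" "\<forall>j. \<mu> * p$j + (1 - \<mu>) * q$j \<ge> 0"
    "\<exists>j. \<mu> * p$j + (1 - \<mu>) * q$j = 0"
proof -
  define J where "J = {j. q$j \<le> 0}"
  define f where "f j = - q$j / (p$j - q$j)" for j
  define \<mu> where "\<mu> = Max (f ` J)"
  have "\<mu> \<in> f ` J" unfolding \<mu>_def using assms(2) by (intro Max_in) (auto simp: J_def)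
  then obtain j0 where "j0 \<in> J" "\<mu> = f j0" by blast
  have f_le: "f j \<le> \<mu>" if "j \<in> J" for j unfolding \<mu>_def using that by (intro Max_ge) auto
  have pq: "p$j - q$j > 0" if "j \<in> J" for j
    using assms(1)[rule_format, of j] that unfolding J_def by simp
  show ?thesis
  proof
    show "0 \<le> \<mu>"
      using \<open>\<mu> = f j0\<close> pq[OF \<open>j0 \<in> J\<close>] \<open>j0 \<in> J\<close> unfolding f_def J_def
      by (auto intro: divide_nonpos_pos)
    have "- q$j0 / (p$j0 - q$j0) < 1"
      using pq[OF \<open>j0 \<in> J\<close>] assms(1)[rule_format, of j0] by (subst divide_less_eq_1_pos) auto
    thus "\<mu> < 1" using \<open>\<mu> = f j0\<close> unfolding f_def by simp
    show "\<forall>j. \<mu> * p$j + (1 - \<mu>) * q$j \<ge> 0"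
    proof
      fix j
      show "\<mu> * p$j + (1 - \<mu>) * q$j \<ge> 0"
      proof (cases "j \<in> J")
        case True
        have "- q$j \<le> \<mu> * (p$j - q$j)"
          using f_le[OF True] pq[OF True] unfolding f_def by (subst (asm) pos_divide_le_eq) auto
        then show ?thesis by (simp add: algebra_simps)
      next
        case False
        then show ?thesis using \<open>0 \<le> \<mu>\<close> \<open>\<mu> < 1\<close> assms(1) by (simp add: J_def less_imp_le)
      qed
    qed
    show "\<exists>j. \<mu> * p$j + (1 - \<mu>) * q$j = 0"
      using \<open>\<mu> = f j0\<close> pq[OF \<open>j0 \<in> J\<close>] by (auto simp: f_def field_simps)
  qed
qed

lemma D_boundary_le_KL:
  fixes p q :: "real^'k::finite" and W :: "real^'k^'k"
  assumes p: "p \<in> prob_simplex" "\<forall>i. p$i > 0" and W: "row_stochastic W" "invertible W"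
    and q: "(\<Sum>j\<in>UNIV. q$j) = 1" "q$i \<le> 0" "\<forall>l. (q v* W)$l \<ge> 0"
  shows "D_boundary p W \<le> KL (q v* W) (p v* W)"
proof -
  have rows: "\<forall>i. (\<Sum>l\<in>UNIV. W$i$l) = 1" using W(1) unfolding row_stochastic_def by simp
  have pW_pos: "\<forall>l. (p v* W)$l > 0" using vector_matrix_mult_pos[OF p(2) W] by blast
  have sum_pW: "(\<Sum>l\<in>UNIV. (p v* W)$l) = 1"
    using p(1) sum_vector_matrix_mult[OF rows] unfolding prob_simplex_def by simp
  obtain \<mu> where \<mu>: "0 \<le> \<mu>" "\<mu> < 1" and r_nonneg: "\<forall>j. \<mu> * p$j + (1 - \<mu>) * q$j \<ge> 0"
    and r_zero: "\<exists>j. \<mu> * p$j + (1 - \<mu>) * q$j = 0"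
    using exists_mix_nonneg_with_zero[OF p(2) q(2)] by auto
  define r where "r = (\<chi> j. \<mu> * p$j + (1 - \<mu>) * q$j)"
  have "(\<Sum>j\<in>UNIV. r$j) = 1"
    using p(1) q(1) unfolding r_def prob_simplex_def
    by (simp add: sum.distrib sum_distrib_left[symmetric])
  hence r: "r \<in> prob_simplex_boundary"
    using r_nonneg r_zero unfolding r_def prob_simplex_boundary_def prob_simplex_def by auto
  have rW: "r v* W = (\<chi> l. \<mu> * (p v* W)$l + (1 - \<mu>) * (q v* W)$l)"
    unfolding r_def vector_matrix_mult_def
    by (simp add: vec_eq_iff sum.distrib[symmetric] sum_distrib_left algebra_simps)
  have "bdd_below ((\<lambda>r. KL (r v* W) (p v* W)) ` prob_simplex_boundary)"
  proof (rule bdd_belowI2)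
    fix r :: "real^'k" assume "r \<in> prob_simplex_boundary"
    hence "r \<in> prob_simplex" unfolding prob_simplex_boundary_def by simp
    thus "0 \<le> KL (r v* W) (p v* W)"
      using pW_pos sum_pW sum_vector_matrix_mult[OF rows, of r] vector_matrix_mult_nonneg[OF _ W(1)]
      by (intro KL_nonneg) (auto simp: prob_simplex_def)
  qed
  hence "D_boundary p W \<le> KL (r v* W) (p v* W)"
    unfolding D_boundary_def using r by (rule cINF_lower)
  also have "\<dots> \<le> (1 - \<mu>) * KL (q v* W) (p v* W)"
    unfolding rW using KL_mix_le[OF q(3) pW_pos] \<mu> by simp
  also have "\<dots> \<le> KL (q v* W) (p v* W)"
    using KL_nonneg[OF q(3) pW_pos] sum_vector_matrix_mult[OF rows, of q] q(1) sum_pW \<mu>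
    by (simp add: mult_left_le_one_le)
  finally show ?thesis .
qed

section \<open>Exponential tilting\<close>

definition tilt :: "real^'k::finite \<Rightarrow> ('k \<Rightarrow> real) \<Rightarrow> real \<Rightarrow> real^'k" where
  "tilt \<pi> a t = (\<chi> l. \<pi>$l * exp (- t * a l) / (\<Sum>m\<in>UNIV. \<pi>$m * exp (- t * a m)))"

lemma sum_tilt:
  fixes \<pi> :: "real^'k::finite"
  assumes "\<forall>l. \<pi>$l > 0"
  shows "(\<Sum>l\<in>UNIV. tilt \<pi> a t $ l) = 1"
proof -
  have "(\<Sum>m\<in>UNIV. \<pi>$m * exp (- t * a m)) > 0" using assms by (intro sum_pos) auto
  thus ?thesis unfolding tilt_def by (simp add: sum_divide_distrib[symmetric])
qed

lemma tilt_pos: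
  fixes \<pi> :: "real^'k::finite"
  assumes "\<forall>l. \<pi>$l > 0"
  shows "tilt \<pi> a t $ l > 0"
proof -
  have "(\<Sum>m\<in>UNIV. \<pi>$m * exp (- t * a m)) > 0" using assms by (intro sum_pos) auto
  moreover have "\<pi>$l * exp (- t * a l) > 0" using assms by simp
  ultimately show ?thesis unfolding tilt_def using divide_pos_pos by simp
qed

lemma KL_tilt:
  fixes \<pi> :: "real^'k::finite"
  assumes "\<forall>l. \<pi>$l > 0"
  shows "KL (tilt \<pi> a t) \<pi>
    = - t * (\<Sum>l\<in>UNIV. tilt \<pi> a t $ l * a l) - ln (\<Sum>l\<in>UNIV. \<pi>$l * exp (- t * a l))"
proof -
  define Z where "Z = (\<Sum>l\<in>UNIV. \<pi>$l * exp (- t * a l))"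
  have "Z > 0" unfolding Z_def using assms by (intro sum_pos) auto
  have "KL (tilt \<pi> a t) \<pi> = (\<Sum>l\<in>UNIV. tilt \<pi> a t $ l * (- t * a l - ln Z))"
    unfolding KL_def
  proof (intro sum.cong refl)
    fix l
    have "tilt \<pi> a t $ l / \<pi>$l = exp (- t * a l) / Z"
      unfolding tilt_def Z_def using assms[rule_format, of l] by simp
    thus "(if tilt \<pi> a t $ l = 0 then 0 else tilt \<pi> a t $ l * ln (tilt \<pi> a t $ l / \<pi>$l))
        = tilt \<pi> a t $ l * (- t * a l - ln Z)"
      using tilt_pos[OF assms] \<open>Z > 0\<close> by (simp add: ln_div)
  qed
  also have "\<dots> = - t * (\<Sum>l\<in>UNIV. tilt \<pi> a t $ l * a l) - ln Z * (\<Sum>l\<in>UNIV. tilt \<pi> a t $ l)"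
    by (simp add: algebra_simps sum_subtractf sum_distrib_left)
  finally show ?thesis using sum_tilt[OF assms] unfolding Z_def by simp
qed

lemma mult_exp_neg_mult_le_abs:
  fixes x t :: real
  assumes "t \<ge> 0"
  shows "x * exp (- t * x) \<le> \<bar>x\<bar>"
proof (cases "x > 0")
  case True
  thus ?thesis using assms by (simp add: mult_left_le)
next
  case False
  thus ?thesis using mult_nonpos_nonneg[of x "exp (- t * x)"] by simp
qed

lemma exists_tilt_mean_zero:
  fixes \<pi> :: "real^'k::finite" and a :: "'k \<Rightarrow> real"
  assumes "\<forall>l. \<pi>$l > 0" "a l0 < 0" "(\<Sum>l\<in>UNIV. \<pi>$l * a l) > 0"
  obtains t where "t \<ge> 0" "(\<Sum>l\<in>UNIV. tilt \<pi> a t $ l * a l) = 0"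
proof -
  define \<psi> where "\<psi> t = (\<Sum>l\<in>UNIV. \<pi>$l * a l * exp (- t * a l))" for t
  define S where "S = (\<Sum>l\<in>UNIV. \<pi>$l * \<bar>a l\<bar>)"
  define c where "c = - a l0"
  \<comment> \<open>at \<open>b\<close> the term of \<open>l0\<close>, at most \<open>- \<pi> l0 c (1 + b c)\<close>, outweighs all the others\<close>
  define b where "b = S / (\<pi>$l0 * c^2)"
  have "c > 0" "\<pi>$l0 > 0" using assms unfolding c_def by auto
  have "S \<ge> 0" unfolding S_def using assms by (intro sum_nonneg) (simp add: less_imp_le)
  hence "b \<ge> 0" unfolding b_def using \<open>c > 0\<close> \<open>\<pi>$l0 > 0\<close> by simp
  have others: "(\<Sum>l\<in>UNIV - {l0}. \<pi>$l * a l * exp (- b * a l)) \<le> S"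
  proof -
    have "\<pi>$l * a l * exp (- b * a l) \<le> \<pi>$l * \<bar>a l\<bar>" for l
      using mult_left_mono[OF mult_exp_neg_mult_le_abs[OF \<open>b \<ge> 0\<close>], of "\<pi>$l" "a l"] assms(1)
      by (simp add: less_imp_le mult.assoc)
    hence "(\<Sum>l\<in>UNIV - {l0}. \<pi>$l * a l * exp (- b * a l)) \<le> (\<Sum>l\<in>UNIV - {l0}. \<pi>$l * \<bar>a l\<bar>)"
      by (intro sum_mono)
    also have "\<dots> \<le> S" unfolding S_def using assms(1) by (intro sum_mono2) (auto simp: less_imp_le)
    finally show ?thesis .
  qed
  have "S \<le> \<pi>$l0 * c * exp (b * c)"
  proof -
    have "\<pi>$l0 * c * (1 + b * c) \<le> \<pi>$l0 * c * exp (b * c)"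
      using \<open>c > 0\<close> \<open>\<pi>$l0 > 0\<close> by (intro mult_left_mono) auto
    moreover have "\<pi>$l0 * c * (1 + b * c) = \<pi>$l0 * c + S"
      unfolding b_def using \<open>c > 0\<close> \<open>\<pi>$l0 > 0\<close> by (simp add: field_simps power2_eq_square)
    moreover have "\<pi>$l0 * c > 0" using \<open>c > 0\<close> \<open>\<pi>$l0 > 0\<close> by simp
    ultimately show ?thesis by linarith
  qed
  hence "\<psi> b \<le> 0"
    using others unfolding \<psi>_def c_def by (simp add: sum.remove[of UNIV l0])
  moreover have "\<psi> 0 \<ge> 0" unfolding \<psi>_def using assms by simp
  moreover have "continuous_on {0..b} \<psi>" unfolding \<psi>_def by (intro continuous_intros)
  ultimately obtain t where "0 \<le> t" "\<psi> t = 0"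
    using IVT2'[of \<psi> b 0 0] \<open>b \<ge> 0\<close> by blast
  moreover have "(\<Sum>l\<in>UNIV. tilt \<pi> a t $ l * a l) = \<psi> t / (\<Sum>m\<in>UNIV. \<pi>$m * exp (- t * a m))"
    unfolding tilt_def \<psi>_def by (simp add: sum_divide_distrib algebra_simps)
  ultimately show ?thesis using that by simp
qed

lemma expect_out_mono:
  assumes "\<forall>i. 0 \<le> p$i" "\<forall>i j. 0 \<le> W$i$j" "\<And>y. f y \<le> g y"
  shows "expect_out p W n f \<le> expect_out p W n g"
  unfolding expect_out_def using assms
  by (intro sum_mono mult_left_mono prod_nonneg) (auto intro: mult_nonneg_nonneg)

lemma expect_out_diff:
  "expect_out p W n f - expect_out p W n g = expect_out p W n (\<lambda>y. f y - g y)"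
  unfolding expect_out_def by (simp add: sum_subtractf right_diff_distrib)

lemma expect_out_abs_diff_le:
  assumes "\<forall>i. 0 \<le> p$i" "\<forall>i j. 0 \<le> W$i$j" "\<And>y. \<bar>f y - g y\<bar> \<le> h y"
  shows "\<bar>expect_out p W n f - expect_out p W n g\<bar> \<le> expect_out p W n h"
proof -
  have "expect_out p W n (\<lambda>y. f y - g y) \<le> expect_out p W n h"
    "expect_out p W n (\<lambda>y. g y - f y) \<le> expect_out p W n h"
    using assms by (auto intro!: expect_out_mono simp: abs_le_iff)
  thus ?thesis unfolding expect_out_diff[symmetric] by linarith
qed

lemma expect_out_cmult: "expect_out p W n (\<lambda>y. c * f y) = c * expect_out p W n f"
  unfolding expect_out_def by (simp add: sum_distrib_left algebra_simps)

lemma expect_out_sum: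
  "expect_out p W n (\<lambda>y. \<Sum>i\<in>I. f i y) = (\<Sum>i\<in>I. expect_out p W n (f i))"
  unfolding expect_out_def sum_distrib_left
  by (subst sum.swap[of _ _ I]) (rule sum.cong[OF refl], rule sum.swap)

lemma expect_out_eq_output_law:
  fixes p :: "real^'k::finite" and W :: "real^'k^'k"
  shows "expect_out p W n g = (\<Sum>y\<in>PiE {..<n} (\<lambda>_. UNIV). (\<Prod>i<n. (p v* W)$(y i)) * g y)"
proof -
  have "(\<Sum>x\<in>PiE {..<n} (\<lambda>_. UNIV). \<Prod>i<n. p$(x i) * W$(x i)$(y i)) = (\<Prod>i<n. (p v* W)$(y i))"
    for y :: "nat \<Rightarrow> 'k"
    using prod_sum_PiE[of "{..<n}" "\<lambda>_. UNIV" "\<lambda>i v. p$v * W$v$(y i)"]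
    by (simp add: vector_matrix_mult_def)
  thus ?thesis
    unfolding expect_out_def by (subst sum.swap) (simp add: sum_distrib_right[symmetric])
qed

lemma expect_out_prod:
  fixes p :: "real^'k::finite" and W :: "real^'k^'k"
  shows "expect_out p W n (\<lambda>y. \<Prod>i<n. f (y i)) = (\<Sum>l\<in>UNIV. (p v* W)$l * f l) ^ n"
  unfolding expect_out_eq_output_law prod.distrib[symmetric]
  using prod_sum_PiE[of "{..<n}" "\<lambda>_. UNIV" "\<lambda>i l. (p v* W)$l * f l"] by simp

lemma expect_out_chernoff:
  fixes p :: "real^'k::finite" and W :: "real^'k^'k"
  assumes "\<forall>i. 0 \<le> p$i" "\<forall>i j. 0 \<le> W$i$j" "t \<ge> 0"
  shows "expect_out p W n (\<lambda>y. of_bool ((\<Sum>j<n. a (y j)) < 0))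
    \<le> (\<Sum>l\<in>UNIV. (p v* W)$l * exp (- t * a l)) ^ n"
proof -
  have "of_bool (s < 0) \<le> exp (- t * s)" for s :: real
    using assms(3) by (cases "s < 0") (auto simp: mult_nonneg_nonpos)
  moreover have "exp (- t * (\<Sum>j<n. a (y j))) = (\<Prod>j<n. exp (- t * a (y j)))" for y :: "nat \<Rightarrow> 'k"
    by (simp add: exp_sum sum_distrib_left)
  ultimately have "expect_out p W n (\<lambda>y. of_bool ((\<Sum>j<n. a (y j)) < 0))
      \<le> expect_out p W n (\<lambda>y. \<Prod>j<n. exp (- t * a (y j)))"
    using assms(1,2) by (intro expect_out_mono) metis+
  also have "\<dots> = (\<Sum>l\<in>UNIV. (p v* W)$l * exp (- t * a l)) ^ n"
    by (rule expect_out_prod)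
  finally show ?thesis .
qed

section \<open>The unconstrained estimator\<close>

lemma sum_emp_dist_mult:
  "(\<Sum>l\<in>UNIV. emp_dist n y $ l * a l) = (\<Sum>j<n. a (y j)) / real n"
proof -
  have "{j. j < n \<and> y j = l} = {..<n} \<inter> {j. y j = l}" for l by auto
  hence "(\<Sum>l\<in>UNIV. emp_dist n y $ l * a l) = (\<Sum>l\<in>UNIV. \<Sum>j<n. of_bool (y j = l) * a l) / real n"
    unfolding emp_dist_def by (simp add: sum_distrib_right[symmetric] sum_divide_distrib[symmetric])
  also have "\<dots> = (\<Sum>j<n. a (y j)) / real n"
    by (subst sum.swap) simp
  finally show ?thesis .
qed

lemma check_est_nth:
  "check_est W n y $ i = (\<Sum>j<n. matrix_inv W $ y j $ i) / real n"
  unfolding check_est_def vector_matrix_mult_def using sum_emp_dist_mult[of n y] by simp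

lemma sum_check_est:
  assumes "n > 0" "row_stochastic W" "invertible W"
  shows "(\<Sum>i\<in>UNIV. check_est W n y $ i) = 1"
proof -
  have "(\<Sum>i\<in>UNIV. \<Sum>j<n. matrix_inv W $ y j $ i) = real n"
    using matrix_inv_row_sum[OF assms(2,3)] by (subst sum.swap) simp
  thus ?thesis unfolding check_est_nth sum_divide_distrib[symmetric] using assms(1) by simp
qed

lemma abs_check_est_le:
  "\<bar>check_est W n y $ k\<bar> \<le> (\<Sum>l\<in>UNIV. \<bar>matrix_inv W $ l $ k\<bar>)"
proof -
  define R where "R = (\<Sum>l\<in>UNIV. \<bar>matrix_inv W $ l $ k\<bar>)"
  have "\<bar>matrix_inv W $ l $ k\<bar> \<le> R" for l
    unfolding R_def by (rule member_le_sum) auto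
  hence "(\<Sum>j<n. \<bar>matrix_inv W $ y j $ k\<bar>) \<le> real n * R"
    using sum_bounded_above[of "{..<n}" "\<lambda>j. \<bar>matrix_inv W $ y j $ k\<bar>" R] by simp
  hence "\<bar>\<Sum>j<n. matrix_inv W $ y j $ k\<bar> \<le> real n * R"
    using sum_abs[of "\<lambda>j. matrix_inv W $ y j $ k" "{..<n}"] by linarith
  hence "\<bar>check_est W n y $ k\<bar> \<le> R"
    unfolding check_est_nth by (cases "n = 0") (auto simp: divide_le_eq R_def sum_nonneg mult.commute)
  thus ?thesis unfolding R_def .
qed

lemma mgf_le_exp_neg_D_boundary:
  fixes p :: "real^'k::finite" and W :: "real^'k^'k"
  assumes p: "p \<in> prob_simplex" "\<forall>i. p$i > 0" and W: "row_stochastic W" "invertible W"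
    and mean_zero: "(\<Sum>l\<in>UNIV. tilt (p v* W) (\<lambda>l. matrix_inv W $ l $ i) t $ l * matrix_inv W $ l $ i) = 0"
  shows "(\<Sum>l\<in>UNIV. (p v* W)$l * exp (- t * matrix_inv W $ l $ i)) \<le> exp (- D_boundary p W)"
proof -
  define M where "M = matrix_inv W"
  define \<pi> where "\<pi> = p v* W"
  define s where "s = tilt \<pi> (\<lambda>l. M$l$i) t"
  define q where "q = s v* M"
  have \<pi>_pos: "\<forall>l. \<pi>$l > 0" unfolding \<pi>_def using vector_matrix_mult_pos[OF p(2) W] by blast
  have qW: "q v* W = s"
    unfolding q_def M_def by (simp add: vector_matrix_mul_assoc matrix_inv_inverse[OF W(2)])
  have "D_boundary p W \<le> KL (q v* W) \<pi>"
    unfolding \<pi>_def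
  proof (rule D_boundary_le_KL[OF p W])
    show "(\<Sum>j\<in>UNIV. q$j) = 1"
      unfolding q_def M_def s_def
      using sum_vector_matrix_mult[of "matrix_inv W"] matrix_inv_row_sum[OF W] sum_tilt[OF \<pi>_pos]
      by simp
    show "q$i \<le> 0"
      using mean_zero unfolding q_def s_def M_def \<pi>_def by (simp add: vector_matrix_mult_def)
    show "\<forall>l. 0 \<le> (q v* W)$l" unfolding qW s_def using tilt_pos[OF \<pi>_pos] by (simp add: less_imp_le)
  qed
  also have "\<dots> = - ln (\<Sum>l\<in>UNIV. \<pi>$l * exp (- t * M$l$i))"
    using mean_zero[folded M_def \<pi>_def] unfolding qW s_def KL_tilt[OF \<pi>_pos] by simp
  finally have "ln (\<Sum>l\<in>UNIV. \<pi>$l * exp (- t * M$l$i)) \<le> - D_boundary p W" by simp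
  moreover have "(\<Sum>l\<in>UNIV. \<pi>$l * exp (- t * M$l$i)) > 0" using \<pi>_pos by (intro sum_pos) auto
  ultimately show ?thesis unfolding \<pi>_def M_def by (metis exp_le_cancel_iff exp_ln)
qed

lemma prob_check_est_neg_le:
  fixes p :: "real^'k::finite" and W :: "real^'k^'k"
  assumes p: "p \<in> prob_simplex" "\<forall>i. p$i > 0" and W: "row_stochastic W" "invertible W"
  shows "expect_out p W n (\<lambda>y. of_bool (check_est W n y $ i < 0)) \<le> exp (- real n * D_boundary p W)"
proof -
  define a where "a l = matrix_inv W $ l $ i" for l
  define \<pi> where "\<pi> = p v* W"
  have nonneg: "\<forall>i. 0 \<le> p$i" "\<forall>i j. 0 \<le> W$i$j"
    using p(1) W(1) unfolding prob_simplex_def row_stochastic_def by auto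
  have \<pi>_pos: "\<forall>l. \<pi>$l > 0" unfolding \<pi>_def using vector_matrix_mult_pos[OF p(2) W] by blast
  have "expect_out p W n (\<lambda>y. of_bool (check_est W n y $ i < 0))
      \<le> expect_out p W n (\<lambda>y. of_bool ((\<Sum>j<n. a (y j)) < 0))"
    using nonneg by (intro expect_out_mono) (auto simp: check_est_nth a_def divide_less_0_iff)
  also have "\<dots> \<le> exp (- real n * D_boundary p W)"
  proof (cases "\<forall>l. a l \<ge> 0")
    case True
    hence "of_bool ((\<Sum>j<n. a (y j)) < 0) = (0 :: real)" for y by (simp add: sum_nonneg not_less)
    thus ?thesis by (simp add: expect_out_def)
  next
    case False
    then obtain l0 where "a l0 < 0" by (auto simp: not_le)
    have "(\<Sum>l\<in>UNIV. \<pi>$l * a l) = (\<pi> v* matrix_inv W)$i"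
      unfolding a_def by (simp add: vector_matrix_mult_def)
    also have "\<dots> = p$i"
      unfolding \<pi>_def by (simp add: vector_matrix_mul_assoc matrix_inv_inverse[OF W(2)])
    finally obtain t where "t \<ge> 0" and "(\<Sum>l\<in>UNIV. tilt \<pi> a t $ l * a l) = 0"
      using exists_tilt_mean_zero[of \<pi> a l0] \<pi>_pos \<open>a l0 < 0\<close> p(2) by metis
    hence "(\<Sum>l\<in>UNIV. \<pi>$l * exp (- t * a l)) \<le> exp (- D_boundary p W)"
      using mgf_le_exp_neg_D_boundary[OF p W] unfolding \<pi>_def a_def by blast
    moreover have "(\<Sum>l\<in>UNIV. \<pi>$l * exp (- t * a l)) \<ge> 0"
      using \<pi>_pos by (intro sum_nonneg) (simp add: less_imp_le)
    ultimately have "(\<Sum>l\<in>UNIV. \<pi>$l * exp (- t * a l)) ^ n \<le> exp (- D_boundary p W) ^ n"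
      by (rule power_mono)
    also have "\<dots> = exp (- real n * D_boundary p W)"
      by (simp add: exp_of_nat_mult[symmetric])
    finally show ?thesis
      using expect_out_chernoff[OF nonneg \<open>t \<ge> 0\<close>, of n a] unfolding \<pi>_def by linarith
  qed
  finally show ?thesis .
qed

lemma prob_simplex_coord_bounds:
  fixes r :: "real^'k::finite"
  assumes "r \<in> prob_simplex"
  shows "0 \<le> r$i" "r$i \<le> 1"
proof -
  show "0 \<le> r$i" using assms unfolding prob_simplex_def by auto
  have "r$i \<le> (\<Sum>j\<in>UNIV. r$j)"
    using assms unfolding prob_simplex_def by (intro member_le_sum) auto
  thus "r$i \<le> 1" using assms unfolding prob_simplex_def by auto
qed

lemma proj_power_diff_le:
  fixes Proj :: "real^'k::finite \<Rightarrow> real^'k" and c p :: "real^'k"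
  assumes "\<forall>v. (\<Sum>i\<in>UNIV. v$i) = 1 \<longrightarrow> Proj v \<in> prob_simplex" "\<forall>v\<in>prob_simplex. Proj v = v"
    and "p \<in> prob_simplex" "(\<Sum>i\<in>UNIV. c$i) = 1" "\<bar>c$k\<bar> \<le> R"
  shows "\<bar>((Proj c)$k - p$k) ^ \<rho> - (c$k - p$k) ^ \<rho>\<bar>
    \<le> (1 + (R + 1) ^ \<rho>) * (\<Sum>i\<in>UNIV. of_bool (c$i < 0))"
proof (cases "c \<in> prob_simplex")
  case True
  thus ?thesis using assms(2,5) by (simp add: sum_nonneg)
next
  case False
  then obtain i where "c$i < 0" using assms(4) unfolding prob_simplex_def by (auto simp: not_le)
  hence "of_bool (c$i < 0) \<le> (\<Sum>i\<in>UNIV. of_bool (c$i < 0) :: real)"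
    by (intro member_le_sum) auto
  hence "1 \<le> (\<Sum>i\<in>UNIV. of_bool (c$i < 0) :: real)" using \<open>c$i < 0\<close> by simp
  have "Proj c \<in> prob_simplex" using assms(1,4) by blast
  hence "\<bar>(Proj c)$k - p$k\<bar> \<le> 1"
    using prob_simplex_coord_bounds[of "Proj c" k] prob_simplex_coord_bounds[OF assms(3), of k] by linarith
  hence "\<bar>((Proj c)$k - p$k) ^ \<rho>\<bar> \<le> 1" by (simp add: power_abs power_le_one)
  moreover have "\<bar>c$k - p$k\<bar> \<le> R + 1"
    using prob_simplex_coord_bounds[OF assms(3), of k] assms(5) by linarith
  hence "\<bar>(c$k - p$k) ^ \<rho>\<bar> \<le> (R + 1) ^ \<rho>" by (simp add: power_abs power_mono)
  ultimately have "\<bar>((Proj c)$k - p$k) ^ \<rho> - (c$k - p$k) ^ \<rho>\<bar> \<le> 1 + (R + 1) ^ \<rho>"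
    using abs_triangle_ineq4[of "((Proj c)$k - p$k) ^ \<rho>" "(c$k - p$k) ^ \<rho>"] by linarith
  moreover have "0 \<le> 1 + (R + 1) ^ \<rho>" using assms(5) by simp
  ultimately show ?thesis
    using mult_left_mono[OF \<open>1 \<le> (\<Sum>i\<in>UNIV. of_bool (c$i < 0))\<close>, of "1 + (R + 1) ^ \<rho>"] by simp
qed

theorem lemma12:
  fixes p :: "real^'k::finite" and W :: "real^'k^'k"
    and Proj :: "real^'k \<Rightarrow> real^'k" and \<rho> :: nat and k :: 'k
  assumes "CARD('k) \<ge> 2"
    and "p \<in> prob_simplex" and "\<forall>i. p$i > 0"
    and "row_stochastic W" and "invertible W"
    and "\<forall>v. sum (\<lambda>i. v$i) UNIV = 1 \<longrightarrow> Proj v \<in> prob_simplex"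
    and "\<forall>v\<in>prob_simplex. Proj v = v"
    and "\<rho> > 0"
  shows "\<exists>C>0. \<forall>n::nat.
     \<bar>real n ^ \<rho> * expect_out p W n (\<lambda>y. ((Proj (check_est W n y))$k - p$k) ^ \<rho>)
      - real n ^ \<rho> * expect_out p W n (\<lambda>y. ((check_est W n y)$k - p$k) ^ \<rho>)\<bar>
     \<le> C * real n ^ \<rho> * exp (- real n * D_boundary p W)"
proof -
  define B where "B = 1 + ((\<Sum>l\<in>UNIV. \<bar>matrix_inv W $ l $ k\<bar>) + 1) ^ \<rho>"
  define C where "C = B * CARD('k)"
  define E where "E f n = expect_out p W n (\<lambda>y. ((f (check_est W n y))$k - p$k) ^ \<rho>)"
    for f :: "real^'k \<Rightarrow> real^'k" and n
  have "B > 0" unfolding B_def by (simp add: add_pos_nonneg sum_nonneg)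
  have nonneg: "\<forall>i. 0 \<le> p$i" "\<forall>i j. 0 \<le> W$i$j"
    using assms(2,4) unfolding prob_simplex_def row_stochastic_def by auto
  have diff: "\<bar>E Proj n - E (\<lambda>v. v) n\<bar> \<le> C * exp (- real n * D_boundary p W)" if "n > 0" for n
  proof -
    have "\<bar>((Proj (check_est W n y))$k - p$k) ^ \<rho> - ((check_est W n y)$k - p$k) ^ \<rho>\<bar>
        \<le> B * (\<Sum>i\<in>UNIV. of_bool (check_est W n y $ i < 0))" for y
      unfolding B_def
      by (rule proj_power_diff_le[OF assms(6,7,2) sum_check_est[OF that assms(4,5)] abs_check_est_le])
    hence "\<bar>E Proj n - E (\<lambda>v. v) n\<bar>
        \<le> expect_out p W n (\<lambda>y. B * (\<Sum>i\<in>UNIV. of_bool (check_est W n y $ i < 0)))"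
      unfolding E_def by (rule expect_out_abs_diff_le[OF nonneg])
    also have "\<dots> \<le> B * (\<Sum>i\<in>(UNIV :: 'k set). exp (- real n * D_boundary p W))"
      unfolding expect_out_cmult expect_out_sum using \<open>B > 0\<close>
      by (intro mult_left_mono sum_mono prob_check_est_neg_le assms(2-5)) auto
    finally show ?thesis unfolding C_def by simp
  qed
  have "\<bar>real n ^ \<rho> * E Proj n - real n ^ \<rho> * E (\<lambda>v. v) n\<bar>
      \<le> C * real n ^ \<rho> * exp (- real n * D_boundary p W)" for n
  proof (cases "n = 0")
    case True
    thus ?thesis using assms(8) by (simp add: power_0_left)
  next
    case False
    have "\<bar>real n ^ \<rho> * E Proj n - real n ^ \<rho> * E (\<lambda>v. v) n\<bar>
        = real n ^ \<rho> * \<bar>E Proj n - E (\<lambda>v. v) n\<bar>"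
      by (simp add: right_diff_distrib[symmetric] abs_mult)
    also have "\<dots> \<le> real n ^ \<rho> * (C * exp (- real n * D_boundary p W))"
      using diff False by (intro mult_left_mono) auto
    finally show ?thesis by (simp add: mult_ac)
  qed
  moreover have "C > 0" unfolding C_def using \<open>B > 0\<close> by simp
  ultimately show ?thesis unfolding E_def by blast
qed

end
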